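(* Let $R\subset\mathbb R^d$ be a compact connected domain with piecewise smooth boundary and $b$ a boundary asymptotic flow such that $(R,b)$ is flexible. Let $\omega$ be the unique minimizer of $\int_R\sigma(\omega'(x))\,dx$ over $\omega'\in\mathrm{AF}(\Lambda,R,b)$. Then $\omega(x)$ lies in the interior of $\mathcal N(\Lambda)$ for almost every $x$ in the interior of $R$.
   Context: $e_1,\dots,e_D\in\mathbb R^d$ span $\mathbb R^d$ with $\sum e_i=0$ (edge vectors of the lattice $\Lambda$). $\mathcal N(\Lambda)=\mathrm{conv}\{e_1,\dots,e_D\}$, $\sigma(s)=\sup_{\alpha}(s\cdot\alpha-\log\sum_je^{e_j\cdot\alpha})$, which is strictly convex on $\mathcal N(\Lambda)$. An asymptotic flow on $R$ is a measurable vector field supported in $R$, divergence free in the interior of $R$ as a distribution, with values in $\mathcal N(\Lambda)$ a.e.; $T(\omega)=\langle\omega,\xi\rangle d\sigma_{\partial R}$ (extended continuously from smooth flows) is its boundary flux; $b=T(\omega_0)$ for some asymptotic flow $\omega_0$, and $\mathrm{AF}(\Lambda,R,b)=T^{-1}(b)$. $(R,b)$ is flexible if for every point $x$ in the interior of $R$ there are a neighbourhood $U$ of $x$ and $\omega'\in\mathrm{AF}(\Lambda,R,b)$ with $\omega'(y)$ in the interior of $\mathcal N(\Lambda)$ for a.e. $y\in U$. *)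

theory Defs
  imports "HOL-Analysis.Analysis"
begin

text \<open>C-infinity real-valued functions on a set S (intended open): the largest class of
  functions that are continuous and differentiable on S and closed under taking
  directional (Frechet) derivatives.\<close>
definition smooth_on :: "'a::euclidean_space set \<Rightarrow> ('a \<Rightarrow> real) \<Rightarrow> bool" where
  "smooth_on S f \<longleftrightarrow>
     f \<in> gfp (\<lambda>F. {h. continuous_on S h \<and> (\<forall>x\<in>S. h differentiable at x) \<and>
                       (\<forall>v. (\<lambda>x. frechet_derivative h (at x) v) \<in> F)})"

definition smooth_map_on :: "'a::euclidean_space set \<Rightarrow> ('a \<Rightarrow> 'b::euclidean_space) \<Rightarrow> bool" where
  "smooth_map_on S g \<longleftrightarrow> (\<forall>b\<in>Basis. smooth_on S (\<lambda>x. g x \<bullet> b))"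

definition grad :: "('a::euclidean_space \<Rightarrow> real) \<Rightarrow> 'a \<Rightarrow> 'a" where
  "grad \<phi> x = (\<Sum>b\<in>Basis. frechet_derivative \<phi> (at x) b *\<^sub>R b)"

text \<open>Piecewise smooth boundary: the boundary is a finite union of compact pieces, each the
  image of a compact subset of a hyperplane under an injective smooth immersion.\<close>
definition piecewise_smooth_boundary :: "'a::euclidean_space set \<Rightarrow> bool" where
  "piecewise_smooth_boundary R \<longleftrightarrow>
     (\<exists>P :: (('a \<Rightarrow> 'a) \<times> 'a set \<times> 'a) set. finite P \<and>
        frontier R = (\<Union>(g, K, n)\<in>P. g ` K) \<and>
        (\<forall>(g, K, n)\<in>P. norm n = 1 \<and> compact K \<and> K \<subseteq> {x. x \<bullet> n = 0} \<and> inj_on g K \<and>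
           (\<exists>U. open U \<and> K \<subseteq> U \<and> smooth_map_on U g \<and>
              (\<forall>x\<in>K. inj_on (frechet_derivative g (at x)) {v. v \<bullet> n = 0}))))"

text \<open>Newton polytope of the lattice: convex hull of the edge vectors.\<close>
definition newton :: "(nat \<Rightarrow> 'a::euclidean_space) \<Rightarrow> nat \<Rightarrow> 'a set" where
  "newton e D = convex hull (e ` {..<D})"

definition sigma :: "(nat \<Rightarrow> 'a::euclidean_space) \<Rightarrow> nat \<Rightarrow> 'a \<Rightarrow> real" where
  "sigma e D s = (SUP \<alpha>. s \<bullet> \<alpha> - ln (\<Sum>j<D. exp (e j \<bullet> \<alpha>)))"

definition asymptotic_flow ::
  "(nat \<Rightarrow> 'a::euclidean_space) \<Rightarrow> nat \<Rightarrow> 'a set \<Rightarrow> ('a \<Rightarrow> 'a) \<Rightarrow> bool" where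
  "asymptotic_flow e D R \<omega> \<longleftrightarrow>
     \<omega> \<in> borel_measurable lebesgue \<and>
     (\<forall>x. x \<notin> R \<longrightarrow> \<omega> x = 0) \<and>
     (AE x in lebesgue. \<omega> x \<in> newton e D) \<and>
     (\<forall>\<phi>. smooth_on UNIV \<phi> \<and> compact (closure {x. \<phi> x \<noteq> 0}) \<and>
           closure {x. \<phi> x \<noteq> 0} \<subseteq> interior R \<longrightarrow>
           (LINT x|lebesgue. \<omega> x \<bullet> grad \<phi> x) = 0)"

text \<open>Equality of boundary fluxes, expressed weakly: for divergence-free flows on R,
  the pairing of the boundary flux with a smooth function phi equals the integral
  of omega . grad phi over R (divergence theorem).\<close>
definition same_flux :: "'a::euclidean_space set \<Rightarrow> ('a \<Rightarrow> 'a) \<Rightarrow> ('a \<Rightarrow> 'a) \<Rightarrow> bool" where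
  "same_flux R \<omega> \<omega>0 \<longleftrightarrow>
     (\<forall>\<phi>. smooth_on UNIV \<phi> \<longrightarrow>
        (LINT x:R|lebesgue. \<omega> x \<bullet> grad \<phi> x) = (LINT x:R|lebesgue. \<omega>0 x \<bullet> grad \<phi> x))"

text \<open>AF(Lambda, R, b) with b = T(omega0).\<close>
definition AF :: "(nat \<Rightarrow> 'a::euclidean_space) \<Rightarrow> nat \<Rightarrow> 'a set \<Rightarrow> ('a \<Rightarrow> 'a) \<Rightarrow> ('a \<Rightarrow> 'a) set" where
  "AF e D R \<omega>0 = {\<omega>. asymptotic_flow e D R \<omega> \<and> same_flux R \<omega> \<omega>0}"

definition flexible :: "(nat \<Rightarrow> 'a::euclidean_space) \<Rightarrow> nat \<Rightarrow> 'a set \<Rightarrow> ('a \<Rightarrow> 'a) \<Rightarrow> bool" where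
  "flexible e D R \<omega>0 \<longleftrightarrow>
     (\<forall>x\<in>interior R. \<exists>U. open U \<and> x \<in> U \<and>
        (\<exists>\<omega>'\<in>AF e D R \<omega>0. AE y in lebesgue. y \<in> U \<longrightarrow> \<omega>' y \<in> interior (newton e D)))"

end

theory Submission
  imports Defs
begin

text \<open>The function \<open>\<sigma>\<close> is the convex conjugate of \<open>\<alpha> \<mapsto> ln (\<Sum>j. exp (e j \<bullet> \<alpha>))\<close>, so on the
  Newton polytope it is the least negative entropy \<open>\<Sum>j. p j ln (p j)\<close> of a probability vector \<open>p\<close>
  with \<open>\<Sum>j. p j e j = s\<close>. At a boundary point \<open>s\<close> of the polytope every such \<open>p\<close> (nearly) vanishes
  on a vertex off a supporting face of \<open>s\<close>; moving a distance \<open>t\<close> towards an interior point forces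
  that weight up to order \<open>t\<close>, which changes the entropy by order \<open>t ln t\<close>. So \<open>\<sigma>\<close> has slope
  \<open>-\<infinity>\<close> at the boundary in every inward direction.

  If the minimiser \<open>\<omega>\<close> took boundary values on a set of positive measure inside an open set where
  some competitor \<open>\<omega>'\<close> is interior (flexibility), then \<open>(1 - t) \<omega> + t \<omega>'\<close>, still admissible by
  convexity, would have strictly smaller energy for small \<open>t\<close>. Countably many such open sets
  cover the interior of \<open>R\<close> by Lindelof's theorem.\<close>

section \<open>Probability weights and the Newton polytope\<close>

definition prob_weights :: "nat \<Rightarrow> (nat \<Rightarrow> real) \<Rightarrow> bool" where
  "prob_weights D p \<longleftrightarrow> (\<forall>j<D. 0 \<le> p j) \<and> (\<Sum>j<D. p j) = 1"

definition convex_comb :: "(nat \<Rightarrow> 'a::real_vector) \<Rightarrow> nat \<Rightarrow> (nat \<Rightarrow> real) \<Rightarrow> 'a" where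
  "convex_comb e D p = (\<Sum>j<D. p j *\<^sub>R e j)"

definition neg_entropy :: "nat \<Rightarrow> (nat \<Rightarrow> real) \<Rightarrow> real" where
  "neg_entropy D p = (\<Sum>j<D. p j * ln (p j))"

definition log_partition :: "(nat \<Rightarrow> 'a::real_inner) \<Rightarrow> nat \<Rightarrow> 'a \<Rightarrow> real" where
  "log_partition e D \<alpha> = ln (\<Sum>j<D. exp (e j \<bullet> \<alpha>))"

definition gibbs_weights :: "(nat \<Rightarrow> 'a::real_inner) \<Rightarrow> nat \<Rightarrow> 'a \<Rightarrow> nat \<Rightarrow> real" where
  "gibbs_weights e D \<alpha> j = exp (e j \<bullet> \<alpha>) / (\<Sum>i<D. exp (e i \<bullet> \<alpha>))"

lemma prob_weights_le_one:
  assumes "prob_weights D p" "j < D"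
  shows "p j \<le> 1"
proof -
  have "p j \<le> (\<Sum>i<D. p i)"
    using assms by (intro member_le_sum) (auto simp: prob_weights_def)
  then show ?thesis using assms(1) by (simp add: prob_weights_def)
qed

lemma prob_weights_imp_pos: "prob_weights D p \<Longrightarrow> 0 < D"
  unfolding prob_weights_def by (cases D) auto

lemma prob_weights_mix:
  "prob_weights D p \<Longrightarrow> prob_weights D q \<Longrightarrow> 0 \<le> t \<Longrightarrow> t \<le> 1 \<Longrightarrow>
     prob_weights D (\<lambda>j. (1 - t) * p j + t * q j)"
  by (auto simp: prob_weights_def sum.distrib sum_distrib_left[symmetric])

lemma prob_weights_uniform: "0 < D \<Longrightarrow> prob_weights D (\<lambda>_. 1 / real D)"
  by (simp add: prob_weights_def)

lemma convex_comb_mix: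
  "convex_comb e D (\<lambda>j. a * p j + b * q j) = a *\<^sub>R convex_comb e D p + b *\<^sub>R convex_comb e D q"
  by (simp add: convex_comb_def scaleR_add_left sum.distrib scaleR_sum_right)

lemma mem_newton_iff: "s \<in> newton e D \<longleftrightarrow> (\<exists>p. prob_weights D p \<and> s = convex_comb e D p)"
proof -
  let ?C = "{convex_comb e D p |p. prob_weights D p}"
  have "convex ?C"
  proof (rule convexI)
    fix x y and u v :: real
    assume "x \<in> ?C" "y \<in> ?C" "0 \<le> u" "0 \<le> v" "u + v = 1"
    then obtain p q where pq: "prob_weights D p" "prob_weights D q"
      and "x = convex_comb e D p" "y = convex_comb e D q" "u = 1 - v"
      by auto
    then have "u *\<^sub>R x + v *\<^sub>R y = convex_comb e D (\<lambda>j. (1 - v) * p j + v * q j)"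
      by (simp add: convex_comb_mix)
    then show "u *\<^sub>R x + v *\<^sub>R y \<in> ?C"
      using prob_weights_mix[OF pq] \<open>0 \<le> v\<close> \<open>u + v = 1\<close> \<open>0 \<le> u\<close> by force
  qed
  moreover have "e ` {..<D} \<subseteq> ?C"
  proof (rule image_subsetI)
    fix i assume "i \<in> {..<D}"
    then have "i < D" by simp
    then have "prob_weights D (\<lambda>j. if j = i then 1 else 0)"
      by (simp add: prob_weights_def)
    moreover have "convex_comb e D (\<lambda>j. if j = i then 1 else 0) = e i"
    proof -
      have "(\<lambda>j. (if j = i then 1 else 0) *\<^sub>R e j) = (\<lambda>j. if j = i then e i else 0)"
        by auto
      then show ?thesis using \<open>i < D\<close> by (simp only: convex_comb_def) simp
    qed
    ultimately show "e i \<in> ?C" by force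
  qed
  ultimately have "newton e D \<subseteq> ?C"
    unfolding newton_def by (rule hull_minimal[rotated])
  moreover have "?C \<subseteq> newton e D"
  proof clarify
    fix p assume "prob_weights D p"
    then show "convex_comb e D p \<in> newton e D"
      unfolding newton_def convex_comb_def prob_weights_def
      by (intro convex_sum convex_convex_hull hull_inc) auto
  qed
  ultimately show ?thesis by blast
qed

lemma newton_convex: "convex (newton e D)"
  unfolding newton_def by (rule convex_convex_hull)

lemma newton_compact: "compact (newton e D)"
  unfolding newton_def by (intro compact_convex_hull finite_imp_compact) auto

lemma newton_nonempty_imp_pos: "s \<in> newton e D \<Longrightarrow> 0 < D"
  using mem_newton_iff prob_weights_imp_pos by blast

lemma newton_segment:
  "s \<in> newton e D \<Longrightarrow> s' \<in> newton e D \<Longrightarrow> 0 \<le> t \<Longrightarrow> t \<le> 1 \<Longrightarrow>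
     (1 - t) *\<^sub>R s + t *\<^sub>R s' \<in> newton e D"
  using newton_convex by (rule convexD) auto

lemma e_in_newton: "j < D \<Longrightarrow> e j \<in> newton e D"
  unfolding newton_def by (rule hull_inc) simp

section \<open>Entropy and the function \<open>\<sigma>\<close>\<close>

lemma xlnx_tangent_le:
  fixes x y :: real
  assumes "0 < y" "0 \<le> x"
  shows "y * ln y + (ln y + 1) * (x - y) \<le> x * ln x"
proof (cases "x = 0")
  case True
  then show ?thesis using assms by (simp add: algebra_simps)
next
  case False
  with assms have "0 < x" by simp
  have "x - y = x * (1 - y / x)"
    using \<open>0 < x\<close> by (simp add: field_simps)
  also have "\<dots> \<le> x * ln (x / y)"
    using ln_le_minus_one[of "y / x"] \<open>0 < x\<close> assms
    by (intro mult_left_mono) (auto simp: ln_div)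
  also have "\<dots> = x * ln x - x * ln y"
    using \<open>0 < x\<close> assms by (simp add: ln_div algebra_simps)
  finally show ?thesis by (simp add: algebra_simps)
qed

lemma xlnx_ge: "0 \<le> (a::real) \<Longrightarrow> a - 1 \<le> a * ln a"
  using xlnx_tangent_le[of 1 a] by simp

lemma xlnx_nonpos: "0 \<le> (b::real) \<Longrightarrow> b \<le> 1 \<Longrightarrow> b * ln b \<le> 0"
  by (cases "b = 0") (auto intro!: mult_nonneg_nonpos)

lemma xlnx_convex:
  fixes a b t :: real
  assumes "0 \<le> a" "0 \<le> b" "0 \<le> t" "t \<le> 1" and pos: "0 < (1 - t) * a + t * b"
  shows "((1 - t) * a + t * b) * ln ((1 - t) * a + t * b) \<le> (1 - t) * (a * ln a) + t * (b * ln b)"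
proof -
  define y where "y = (1 - t) * a + t * b"
  have "(1 - t) * (y * ln y + (ln y + 1) * (a - y)) + t * (y * ln y + (ln y + 1) * (b - y))
      \<le> (1 - t) * (a * ln a) + t * (b * ln b)"
    using assms pos xlnx_tangent_le[of y] by (intro add_mono mult_left_mono) (auto simp: y_def)
  moreover have "(1 - t) * (y * ln y + (ln y + 1) * (a - y)) + t * (y * ln y + (ln y + 1) * (b - y))
      = y * ln y"
    by (simp add: y_def algebra_simps)
  ultimately show ?thesis by (simp add: y_def)
qed

lemma xlnx_le_of_bounds:
  fixes a b y :: real
  assumes "0 < a" "a \<le> y" "y \<le> b" "b \<le> 1"
  shows "y * ln y \<le> a * ln b"
proof -
  have "y * ln y \<le> y * ln b"
    using assms by (intro mult_left_mono) auto
  also have "\<dots> \<le> a * ln b"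
    using assms by (intro mult_right_mono_neg) auto
  finally show ?thesis .
qed

lemma neg_xlnx_le_sqrt:
  fixes a :: real
  assumes "0 \<le> a"
  shows "- (a * ln a) \<le> 2 * sqrt a"
proof (cases "a = 0")
  case False
  with assms have "0 < a" by simp
  have "- ln a = 2 * ln (inverse (sqrt a))"
    using \<open>0 < a\<close> by (simp add: ln_sqrt ln_inverse)
  also have "\<dots> \<le> 2 * (inverse (sqrt a) - 1)"
    using \<open>0 < a\<close> by (intro mult_left_mono ln_le_minus_one) auto
  finally have "a * - ln a \<le> a * (2 * (inverse (sqrt a) - 1))"
    using \<open>0 < a\<close> by (intro mult_left_mono) auto
  also have "\<dots> = 2 * sqrt a - 2 * a"
    using \<open>0 < a\<close> by (simp add: algebra_simps real_div_sqrt flip: divide_inverse)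
  also have "\<dots> \<le> 2 * sqrt a"
    using \<open>0 < a\<close> by simp
  finally show ?thesis by simp
qed simp

lemma neg_entropy_nonpos: "prob_weights D p \<Longrightarrow> neg_entropy D p \<le> 0"
  unfolding neg_entropy_def
  by (intro sum_nonpos xlnx_nonpos) (auto simp: prob_weights_def prob_weights_le_one)

lemma gibbs_weights_pos: "0 < D \<Longrightarrow> 0 < gibbs_weights e D \<alpha> j"
  unfolding gibbs_weights_def by (intro divide_pos_pos sum_pos) auto

lemma prob_weights_gibbs_weights: "0 < D \<Longrightarrow> prob_weights D (gibbs_weights e D \<alpha>)"
  using gibbs_weights_pos[of D e \<alpha>] sum_pos[of "{..<D}" "\<lambda>i. exp (e i \<bullet> \<alpha>)"]
  by (auto simp: prob_weights_def gibbs_weights_def sum_divide_distrib[symmetric] less_imp_le)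

lemma ln_gibbs_weights:
  assumes "0 < D"
  shows "ln (gibbs_weights e D \<alpha> j) = e j \<bullet> \<alpha> - log_partition e D \<alpha>"
proof -
  have "0 < (\<Sum>i<D. exp (e i \<bullet> \<alpha>))"
    using assms by (intro sum_pos) auto
  then show ?thesis by (simp add: gibbs_weights_def log_partition_def ln_div)
qed

lemma dual_eq_cross_entropy:
  assumes "prob_weights D p"
  shows "convex_comb e D p \<bullet> \<alpha> - log_partition e D \<alpha> = (\<Sum>j<D. p j * ln (gibbs_weights e D \<alpha> j))"
  using assms prob_weights_imp_pos[OF assms]
  by (simp add: ln_gibbs_weights convex_comb_def inner_sum_left right_diff_distrib sum_subtractf
      sum_distrib_right[symmetric] prob_weights_def)

text \<open>Gibbs' inequality, with equality at the Gibbs weights of \<open>\<alpha>\<close>.\<close>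

lemma dual_le_neg_entropy:
  assumes p: "prob_weights D p"
  shows "convex_comb e D p \<bullet> \<alpha> - log_partition e D \<alpha> \<le> neg_entropy D p"
proof -
  let ?g = "gibbs_weights e D \<alpha>"
  have D: "0 < D" using prob_weights_imp_pos[OF p] .
  have "(\<Sum>j<D. p j * ln (?g j))
      = (\<Sum>j<D. ?g j * ln (?g j) + (ln (?g j) + 1) * (p j - ?g j))"
    using p prob_weights_gibbs_weights[OF D, of e \<alpha>]
    by (simp add: algebra_simps sum.distrib sum_subtractf prob_weights_def)
  also have "\<dots> \<le> neg_entropy D p"
    unfolding neg_entropy_def using p gibbs_weights_pos[OF D]
    by (intro sum_mono xlnx_tangent_le) (auto simp: prob_weights_def)
  finally show ?thesis using dual_eq_cross_entropy[OF p, of e \<alpha>] by simp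
qed

lemma neg_entropy_gibbs_weights:
  assumes "0 < D"
  shows "neg_entropy D (gibbs_weights e D \<alpha>)
     = convex_comb e D (gibbs_weights e D \<alpha>) \<bullet> \<alpha> - log_partition e D \<alpha>"
  using dual_eq_cross_entropy[of D "gibbs_weights e D \<alpha>" e \<alpha>]
    prob_weights_gibbs_weights[OF assms, of e \<alpha>]
  by (simp add: neg_entropy_def)

lemma sigma_eq_SUP_dual: "sigma e D s = (SUP \<alpha>. s \<bullet> \<alpha> - log_partition e D \<alpha>)"
  by (simp add: sigma_def log_partition_def)

lemma dual_le_zero: "s \<in> newton e D \<Longrightarrow> s \<bullet> \<alpha> - log_partition e D \<alpha> \<le> 0"
  using dual_le_neg_entropy neg_entropy_nonpos mem_newton_iff by (metis order_trans)

lemma bdd_above_dual: "s \<in> newton e D \<Longrightarrow> bdd_above (range (\<lambda>\<alpha>. s \<bullet> \<alpha> - log_partition e D \<alpha>))"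
  using dual_le_zero by (intro bdd_aboveI[of _ 0]) auto

lemma dual_le_sigma: "s \<in> newton e D \<Longrightarrow> s \<bullet> \<alpha> - log_partition e D \<alpha> \<le> sigma e D s"
  unfolding sigma_eq_SUP_dual by (intro cSUP_upper bdd_above_dual) auto

lemma sigma_le_neg_entropy:
  "prob_weights D p \<Longrightarrow> sigma e D (convex_comb e D p) \<le> neg_entropy D p"
  unfolding sigma_eq_SUP_dual by (rule cSUP_least) (auto intro: dual_le_neg_entropy)

lemma sigma_nonpos: "s \<in> newton e D \<Longrightarrow> sigma e D s \<le> 0"
  using sigma_le_neg_entropy neg_entropy_nonpos mem_newton_iff by (metis order_trans)

lemma sigma_ge_minus_ln: "s \<in> newton e D \<Longrightarrow> - ln (real D) \<le> sigma e D s"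
  using dual_le_sigma[of s e D 0] by (simp add: log_partition_def)

lemma sigma_convex: "convex_on (newton e D) (sigma e D)"
proof (rule convex_onI[OF _ newton_convex])
  fix t :: real and s s'
  assume "0 < t" "t < 1" "s \<in> newton e D" "s' \<in> newton e D"
  show "sigma e D ((1 - t) *\<^sub>R s + t *\<^sub>R s') \<le> (1 - t) * sigma e D s + t * sigma e D s'"
    unfolding sigma_eq_SUP_dual[of e D "(1 - t) *\<^sub>R s + t *\<^sub>R s'"]
  proof (rule cSUP_least)
    fix \<alpha>
    have "((1 - t) *\<^sub>R s + t *\<^sub>R s') \<bullet> \<alpha> - log_partition e D \<alpha>
        = (1 - t) * (s \<bullet> \<alpha> - log_partition e D \<alpha>) + t * (s' \<bullet> \<alpha> - log_partition e D \<alpha>)"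
      by (simp add: inner_add_left algebra_simps)
    also have "\<dots> \<le> (1 - t) * sigma e D s + t * sigma e D s'"
      using \<open>0 < t\<close> \<open>t < 1\<close> \<open>s \<in> newton e D\<close> \<open>s' \<in> newton e D\<close>
      by (intro add_mono mult_left_mono dual_le_sigma) auto
    finally show "((1 - t) *\<^sub>R s + t *\<^sub>R s') \<bullet> \<alpha> - log_partition e D \<alpha>
        \<le> (1 - t) * sigma e D s + t * sigma e D s'" .
  qed simp
qed

lemma sigma_segment_le_ln:
  assumes "s \<in> newton e D" "s' \<in> newton e D" "0 \<le> t" "t \<le> 1"
  shows "sigma e D ((1 - t) *\<^sub>R s + t *\<^sub>R s') \<le> sigma e D s + t * ln (real D)"
proof -
  have "sigma e D ((1 - t) *\<^sub>R s + t *\<^sub>R s') \<le> (1 - t) * sigma e D s + t * sigma e D s'"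
    using assms by (intro convex_onD[OF sigma_convex]) auto
  moreover have "t * (sigma e D s' - sigma e D s) \<le> t * ln (real D)"
    using assms sigma_nonpos[OF assms(2)] sigma_ge_minus_ln[OF assms(1)] by (intro mult_left_mono) auto
  ultimately show ?thesis
    by (simp add: algebra_simps)
qed

lemma log_partition_has_derivative:
  assumes "0 < D"
  shows "(log_partition e D has_derivative (\<lambda>v. convex_comb e D (gibbs_weights e D \<alpha>) \<bullet> v)) (at \<alpha>)"
proof -
  have Z: "0 < (\<Sum>j<D. exp (e j \<bullet> \<alpha>))"
    using assms by (intro sum_pos) auto
  have "(log_partition e D has_derivative
      (\<lambda>v. (\<Sum>j<D. exp (e j \<bullet> \<alpha>) * (e j \<bullet> v)) / (\<Sum>j<D. exp (e j \<bullet> \<alpha>)))) (at \<alpha>)"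
    unfolding log_partition_def[abs_def] using Z
    by (auto intro!: derivative_eq_intros simp: divide_inverse mult.commute)
  moreover have "(\<Sum>j<D. exp (e j \<bullet> \<alpha>) * (e j \<bullet> v)) / (\<Sum>j<D. exp (e j \<bullet> \<alpha>))
      = convex_comb e D (gibbs_weights e D \<alpha>) \<bullet> v" for v
    by (simp add: convex_comb_def gibbs_weights_def inner_sum_left sum_divide_distrib)
  ultimately show ?thesis by simp
qed

lemma continuous_on_log_partition:
  assumes "0 < D"
  shows "continuous_on UNIV (log_partition e D)"
proof (rule continuous_at_imp_continuous_on, intro ballI)
  fix \<alpha> :: 'a
  show "isCont (log_partition e D) \<alpha>"
    using log_partition_has_derivative[OF assms] by (rule has_derivative_continuous)
qed

lemma regularised_dual_attains_max:
  assumes s: "s \<in> newton e D" and "0 < \<epsilon>"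
  obtains \<alpha> where "\<And>\<beta>. s \<bullet> \<beta> - log_partition e D \<beta> - \<epsilon> / 2 * (\<beta> \<bullet> \<beta>)
                      \<le> s \<bullet> \<alpha> - log_partition e D \<alpha> - \<epsilon> / 2 * (\<alpha> \<bullet> \<alpha>)"
proof -
  define f where "f \<beta> = s \<bullet> \<beta> - log_partition e D \<beta> - \<epsilon> / 2 * (\<beta> \<bullet> \<beta>)" for \<beta>
  define c where "c = ln (real D)"
  have D: "0 < D" using newton_nonempty_imp_pos[OF s] .
  then have "0 \<le> c" by (simp add: c_def)
  define r where "r = sqrt (2 * (c + 1) / \<epsilon>)"
  have "0 \<le> r"
    unfolding r_def using \<open>0 \<le> c\<close> \<open>0 < \<epsilon>\<close> by (intro real_sqrt_ge_zero divide_nonneg_pos) auto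
  have "continuous_on (cball 0 r) (log_partition e D)"
    using continuous_on_log_partition[OF D] by (rule continuous_on_subset) simp
  then have "continuous_on (cball 0 r) f"
    unfolding f_def by (intro continuous_intros)
  moreover have "cball 0 r \<noteq> {}"
    using \<open>0 \<le> r\<close> by simp
  ultimately obtain \<alpha> where "\<alpha> \<in> cball 0 r" and max_ball: "\<forall>\<beta>\<in>cball 0 r. f \<beta> \<le> f \<alpha>"
    using continuous_attains_sup[of "cball 0 r" f] by auto
  have max_all: "f \<beta> \<le> f \<alpha>" for \<beta>
  proof (cases "\<beta> \<in> cball 0 r")
    case False
    then have "r\<^sup>2 < (norm \<beta>)\<^sup>2"
      using \<open>0 \<le> r\<close> by (intro power_strict_mono) auto
    then have "2 * (c + 1) / \<epsilon> < \<beta> \<bullet> \<beta>"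
      using \<open>0 \<le> c\<close> \<open>0 < \<epsilon>\<close> by (simp add: r_def power2_norm_eq_inner)
    then have "c + 1 < \<epsilon> / 2 * (\<beta> \<bullet> \<beta>)"
      using \<open>0 < \<epsilon>\<close> by (simp add: field_simps)
    then have "f \<beta> < f 0"
      using dual_le_zero[OF s, of \<beta>] by (simp add: f_def c_def log_partition_def)
    also have "f 0 \<le> f \<alpha>"
      using max_ball \<open>0 \<le> r\<close> by simp
    finally show ?thesis by simp
  qed (use max_ball in blast)
  then show ?thesis
    unfolding f_def by (rule that)
qed

lemma regularised_dual_critical_point:
  assumes D: "0 < D"
    and max: "\<And>\<beta>. s \<bullet> \<beta> - log_partition e D \<beta> - \<epsilon> / 2 * (\<beta> \<bullet> \<beta>)
      \<le> s \<bullet> \<alpha> - log_partition e D \<alpha> - \<epsilon> / 2 * (\<alpha> \<bullet> \<alpha>)"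
  shows "s = convex_comb e D (gibbs_weights e D \<alpha>) + \<epsilon> *\<^sub>R \<alpha>"
proof -
  define g where "g = gibbs_weights e D \<alpha>"
  define v where "v = s - convex_comb e D g - \<epsilon> *\<^sub>R \<alpha>"
  have "((\<lambda>\<beta>. s \<bullet> \<beta>) has_derivative (\<lambda>w. s \<bullet> w)) (at \<alpha>)"
    by (rule has_derivative_inner_right[OF has_derivative_ident])
  moreover have "(log_partition e D has_derivative (\<lambda>w. convex_comb e D g \<bullet> w)) (at \<alpha>)"
    unfolding g_def by (rule log_partition_has_derivative[OF D])
  moreover have "((\<lambda>\<beta>. \<beta> \<bullet> \<beta>) has_derivative (\<lambda>w. \<alpha> \<bullet> w + w \<bullet> \<alpha>)) (at \<alpha>)"
    by (rule has_derivative_inner[OF has_derivative_ident has_derivative_ident])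
  ultimately have "((\<lambda>\<beta>. s \<bullet> \<beta> - log_partition e D \<beta> - \<epsilon> / 2 * (\<beta> \<bullet> \<beta>)) has_derivative
      (\<lambda>w. s \<bullet> w - convex_comb e D g \<bullet> w - \<epsilon> / 2 * (\<alpha> \<bullet> w + w \<bullet> \<alpha>))) (at \<alpha>)"
    by (intro has_derivative_diff has_derivative_mult_right)
  then have deriv_zero:
    "(\<lambda>w. s \<bullet> w - convex_comb e D g \<bullet> w - \<epsilon> / 2 * (\<alpha> \<bullet> w + w \<bullet> \<alpha>)) = (\<lambda>w. 0)"
    using max by (intro differential_zero_maxmin[of \<alpha> UNIV]) auto
  have "v \<bullet> v = s \<bullet> v - convex_comb e D g \<bullet> v - \<epsilon> / 2 * (\<alpha> \<bullet> v + v \<bullet> \<alpha>)"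
    by (subst (1) v_def) (simp add: inner_diff_left inner_diff_right inner_commute)
  also have "\<dots> = 0"
    using fun_cong[OF deriv_zero, of v] by simp
  finally have "v = 0" by simp
  moreover have "s = v + convex_comb e D g + \<epsilon> *\<^sub>R \<alpha>"
    by (simp add: v_def)
  ultimately show ?thesis
    by (simp add: g_def)
qed

text \<open>The witness: the Gibbs weights of the maximiser of the regularised dual problem.\<close>

lemma sigma_approx_by_neg_entropy:
  assumes s: "s \<in> newton e D" and "0 < \<eta>"
  obtains p where "prob_weights D p" "neg_entropy D p \<le> sigma e D s"
    "norm (convex_comb e D p - s) \<le> \<eta>"
proof -
  have D: "0 < D" using newton_nonempty_imp_pos[OF s] .
  define c where "c = ln (real D)"
  have "0 \<le> c" using D by (simp add: c_def)
  define \<epsilon> where "\<epsilon> = \<eta>\<^sup>2 / (2 * c + 1)"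
  have "0 < \<epsilon>" using \<open>0 < \<eta>\<close> \<open>0 \<le> c\<close> by (simp add: \<epsilon>_def)
  obtain \<alpha> where max: "\<And>\<beta>. s \<bullet> \<beta> - log_partition e D \<beta> - \<epsilon> / 2 * (\<beta> \<bullet> \<beta>)
      \<le> s \<bullet> \<alpha> - log_partition e D \<alpha> - \<epsilon> / 2 * (\<alpha> \<bullet> \<alpha>)"
    using regularised_dual_attains_max[OF s \<open>0 < \<epsilon>\<close>] by blast
  define g where "g = gibbs_weights e D \<alpha>"
  have crit: "s = convex_comb e D g + \<epsilon> *\<^sub>R \<alpha>"
    unfolding g_def using D max by (rule regularised_dual_critical_point)
  have "neg_entropy D g = convex_comb e D g \<bullet> \<alpha> - log_partition e D \<alpha>"
    unfolding g_def by (rule neg_entropy_gibbs_weights[OF D])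
  also have "\<dots> = s \<bullet> \<alpha> - log_partition e D \<alpha> - \<epsilon> * (\<alpha> \<bullet> \<alpha>)"
    by (subst crit) (simp add: inner_add_left)
  also have "\<dots> \<le> sigma e D s"
    using dual_le_sigma[OF s, of \<alpha>] mult_nonneg_nonneg[OF less_imp_le[OF \<open>0 < \<epsilon>\<close>] inner_ge_zero[of \<alpha>]]
    by linarith
  finally have "neg_entropy D g \<le> sigma e D s" .
  have "\<epsilon> * (\<alpha> \<bullet> \<alpha>) \<le> 2 * c"
    using max[of 0] dual_le_zero[OF s, of \<alpha>] by (simp add: log_partition_def c_def)
  have "(norm (\<epsilon> *\<^sub>R \<alpha>))\<^sup>2 = \<epsilon> * (\<epsilon> * (\<alpha> \<bullet> \<alpha>))"
    by (simp only: power2_norm_eq_inner inner_scaleR_left inner_scaleR_right)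
  also have "\<dots> \<le> \<epsilon> * (2 * c)"
    using \<open>0 < \<epsilon>\<close> \<open>\<epsilon> * (\<alpha> \<bullet> \<alpha>) \<le> 2 * c\<close> by (intro mult_left_mono) auto
  also have "\<dots> = \<eta>\<^sup>2 * (2 * c / (2 * c + 1))"
    by (simp add: \<epsilon>_def)
  also have "\<dots> \<le> \<eta>\<^sup>2 * 1"
    using \<open>0 \<le> c\<close> by (intro mult_left_mono zero_le_power2) (simp add: divide_le_eq_1)
  finally have "(norm (\<epsilon> *\<^sub>R \<alpha>))\<^sup>2 \<le> \<eta>\<^sup>2"
    by simp
  then have "norm (\<epsilon> *\<^sub>R \<alpha>) \<le> \<eta>"
    using \<open>0 < \<eta>\<close> by (rule power2_le_imp_le[OF _ less_imp_le])
  then have "norm (convex_comb e D g - s) \<le> \<eta>"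
    by (subst crit) simp
  moreover have "prob_weights D g"
    unfolding g_def by (rule prob_weights_gibbs_weights[OF D])
  ultimately show ?thesis
    using that \<open>neg_entropy D g \<le> sigma e D s\<close> by blast
qed

section \<open>Infinite slope of \<open>\<sigma>\<close> at the boundary\<close>

text \<open>Mixing in a little of the barycentre of the \<open>e j\<close> gives every weight a uniform positive
  lower bound.\<close>

lemma barycentre_mix_weights:
  assumes r: "cball s' r \<subseteq> newton e D" and D: "0 < D" and "0 < \<kappa>" "\<kappa> \<le> 1/2"
    and y: "norm (y - s') + \<kappa> * norm (s' - convex_comb e D (\<lambda>_. 1 / real D)) \<le> r / 2"
  shows "\<exists>q. prob_weights D q \<and> convex_comb e D q = y \<and> (\<forall>j<D. \<kappa> / real D \<le> q j)"
proof -
  define b where "b = convex_comb e D (\<lambda>_. 1 / real D)"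
  define z where "z = (1 / (1 - \<kappa>)) *\<^sub>R (y - \<kappa> *\<^sub>R b)"
  have "(y - s') + \<kappa> *\<^sub>R (s' - b) = (y - \<kappa> *\<^sub>R b) - (1 - \<kappa>) *\<^sub>R s'"
    by (simp add: algebra_simps)
  then have "(1 / (1 - \<kappa>)) *\<^sub>R ((y - s') + \<kappa> *\<^sub>R (s' - b))
      = z - (1 / (1 - \<kappa>)) *\<^sub>R ((1 - \<kappa>) *\<^sub>R s')"
    by (simp only: z_def scaleR_diff_right)
  also have "(1 / (1 - \<kappa>)) *\<^sub>R ((1 - \<kappa>) *\<^sub>R s') = s'"
    using \<open>\<kappa> \<le> 1/2\<close> by simp
  finally have "z - s' = (1 / (1 - \<kappa>)) *\<^sub>R ((y - s') + \<kappa> *\<^sub>R (s' - b))" by simp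
  then have "norm (z - s') = (1 / (1 - \<kappa>)) * norm ((y - s') + \<kappa> *\<^sub>R (s' - b))"
    using \<open>\<kappa> \<le> 1/2\<close> by simp
  also have "\<dots> \<le> 2 * (norm (y - s') + \<kappa> * norm (s' - b))"
  proof (rule mult_mono)
    show "1 / (1 - \<kappa>) \<le> 2"
      using \<open>\<kappa> \<le> 1/2\<close> by (simp add: field_simps)
    show "norm ((y - s') + \<kappa> *\<^sub>R (s' - b)) \<le> norm (y - s') + \<kappa> * norm (s' - b)"
      using norm_triangle_ineq[of "y - s'" "\<kappa> *\<^sub>R (s' - b)"] \<open>0 < \<kappa>\<close> by simp
  qed auto
  also have "\<dots> \<le> r"
    using y by (simp add: b_def)
  finally have "z \<in> cball s' r"
    by (simp add: dist_norm norm_minus_commute)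
  then have "z \<in> newton e D"
    by (rule subsetD[OF r])
  then obtain p where p: "prob_weights D p" "z = convex_comb e D p"
    unfolding mem_newton_iff by blast
  define q where "q j = (1 - \<kappa>) * p j + \<kappa> * (1 / real D)" for j
  have "prob_weights D q"
    unfolding q_def using prob_weights_mix[OF p(1) prob_weights_uniform[OF D]] \<open>0 < \<kappa>\<close> \<open>\<kappa> \<le> 1/2\<close>
    by simp
  moreover have "convex_comb e D q = y"
  proof -
    have "convex_comb e D q = (1 - \<kappa>) *\<^sub>R z + \<kappa> *\<^sub>R b"
      unfolding q_def b_def p(2) by (rule convex_comb_mix)
    also have "(1 - \<kappa>) *\<^sub>R z = y - \<kappa> *\<^sub>R b"
      using \<open>\<kappa> \<le> 1/2\<close> by (simp add: z_def)
    finally show ?thesis by simp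
  qed
  moreover have "\<forall>j<D. \<kappa> / real D \<le> q j"
    using p \<open>0 < \<kappa>\<close> \<open>\<kappa> \<le> 1/2\<close> by (auto simp: q_def prob_weights_def)
  ultimately show ?thesis by blast
qed

lemma interior_newton_uniform_weights:
  assumes s': "s' \<in> interior (newton e D)"
  obtains \<rho> c where "0 < \<rho>" "0 < c"
    "\<And>y. norm (y - s') \<le> \<rho> \<Longrightarrow> \<exists>q. prob_weights D q \<and> convex_comb e D q = y \<and> (\<forall>j<D. c \<le> q j)"
proof -
  have "\<exists>r>0. cball s' r \<subseteq> interior (newton e D)"
    using bspec[OF open_interior[of "newton e D", unfolded open_contains_cball] s'] .
  then obtain r where "0 < r" and r_int: "cball s' r \<subseteq> interior (newton e D)"
    by auto
  have r: "cball s' r \<subseteq> newton e D"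
    using r_int interior_subset by (rule subset_trans)
  have "s' \<in> newton e D"
    using s' interior_subset by auto
  then have D: "0 < D"
    by (rule newton_nonempty_imp_pos)
  define n where "n = norm (s' - convex_comb e D (\<lambda>_. 1 / real D))"
  define \<kappa> where "\<kappa> = min (1/2) (r / (4 * (n + 1)))"
  have "0 < \<kappa>"
    using \<open>0 < r\<close> by (simp add: \<kappa>_def n_def add_nonneg_pos)
  have "\<kappa> \<le> 1/2"
    unfolding \<kappa>_def by (rule min.cobounded1)
  have "\<kappa> * n \<le> r / (4 * (n + 1)) * (n + 1)"
    using \<open>0 < \<kappa>\<close> by (intro mult_mono) (auto simp: \<kappa>_def n_def)
  also have "\<dots> = r / 4"
  proof -
    have "n + 1 \<noteq> 0" "4 * n + 4 \<noteq> 0"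
      using norm_ge_zero[of "s' - convex_comb e D (\<lambda>_. 1 / real D)"] by (simp_all add: n_def, linarith+)
    then show ?thesis by (simp add: field_simps)
  qed
  finally have "norm (y - s') + \<kappa> * n \<le> r / 2" if "norm (y - s') \<le> r / 4" for y
    using that by simp
  then have "\<exists>q. prob_weights D q \<and> convex_comb e D q = y \<and> (\<forall>j<D. \<kappa> / real D \<le> q j)"
    if "norm (y - s') \<le> r / 4" for y
    using that barycentre_mix_weights[OF r D \<open>0 < \<kappa>\<close> \<open>\<kappa> \<le> 1/2\<close>] by (simp add: n_def)
  moreover have "0 < r / 4" "0 < \<kappa> / real D"
    using \<open>0 < r\<close> \<open>0 < \<kappa>\<close> D by auto
  ultimately show ?thesis using that by blast
qed

lemma newton_boundary_face:
  assumes s: "s \<in> newton e D" "s \<notin> interior (newton e D)"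
    and s': "s' \<in> interior (newton e D)"
  obtains v j0 where "j0 < D" "\<And>y. y \<in> newton e D \<Longrightarrow> v \<bullet> y \<le> v \<bullet> s" "v \<bullet> e j0 < v \<bullet> s"
proof -
  have rel: "rel_interior (newton e D) = interior (newton e D)"
    using s' by (intro rel_interior_nonempty_interior) auto
  with s(2) have "s \<notin> rel_interior (newton e D)" by simp
  with supporting_hyperplane_rel_boundary[OF newton_convex s(1)]
  obtain a where face: "\<And>y. y \<in> newton e D \<Longrightarrow> a \<bullet> s \<le> a \<bullet> y"
    and strict: "\<And>y. y \<in> rel_interior (newton e D) \<Longrightarrow> a \<bullet> s < a \<bullet> y"
    by blast
  have "a \<bullet> s < a \<bullet> s'" using strict s' rel by simp
  have "s' \<in> newton e D"
    using s' interior_subset by auto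
  then obtain p where p: "prob_weights D p" "s' = convex_comb e D p"
    unfolding mem_newton_iff by blast
  have "\<exists>j<D. a \<bullet> s < a \<bullet> e j"
  proof (rule ccontr)
    assume "\<not> ?thesis"
    then have "\<forall>j<D. a \<bullet> e j \<le> a \<bullet> s" by (meson not_less)
    then have "(\<Sum>j<D. p j * (a \<bullet> e j)) \<le> (\<Sum>j<D. p j * (a \<bullet> s))"
      using p by (intro sum_mono mult_left_mono) (auto simp: prob_weights_def)
    then have "a \<bullet> s' \<le> a \<bullet> s"
      using p by (simp add: convex_comb_def inner_sum_right prob_weights_def
          flip: sum_distrib_right)
    then show False using \<open>a \<bullet> s < a \<bullet> s'\<close> by simp
  qed
  then obtain j0 where "j0 < D" "(- a) \<bullet> e j0 < (- a) \<bullet> s" by auto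
  moreover have "\<And>y. y \<in> newton e D \<Longrightarrow> (- a) \<bullet> y \<le> (- a) \<bullet> s"
    using face by simp
  ultimately show ?thesis using that by blast
qed

lemma weight_small_near_face:
  assumes p: "prob_weights D p" and "j0 < D"
    and face: "\<And>j. j < D \<Longrightarrow> v \<bullet> e j \<le> v \<bullet> s" and below: "v \<bullet> e j0 < v \<bullet> s"
    and near: "norm (convex_comb e D p - s) \<le> \<epsilon> * (v \<bullet> s - v \<bullet> e j0) / (norm v + 1)" and "0 \<le> \<epsilon>"
  shows "p j0 \<le> \<epsilon>"
proof -
  define \<delta> where "\<delta> = v \<bullet> s - v \<bullet> e j0"
  have "0 < \<delta>" using below by (simp add: \<delta>_def)
  have "\<delta> * p j0 \<le> (\<Sum>j<D. (v \<bullet> s - v \<bullet> e j) * p j)"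
    unfolding \<delta>_def using \<open>j0 < D\<close> p face
    by (intro member_le_sum mult_nonneg_nonneg) (auto simp: prob_weights_def)
  also have "\<dots> = (\<Sum>j<D. p j * (v \<bullet> s)) - v \<bullet> convex_comb e D p"
    by (simp add: convex_comb_def inner_sum_right algebra_simps sum_subtractf)
  also have "\<dots> = v \<bullet> (s - convex_comb e D p)"
    using p by (simp add: inner_diff_right prob_weights_def flip: sum_distrib_right)
  also have "\<dots> \<le> norm v * norm (s - convex_comb e D p)"
    by (rule order_trans[OF abs_ge_self Cauchy_Schwarz_ineq2])
  also have "\<dots> \<le> (norm v + 1) * (\<epsilon> * \<delta> / (norm v + 1))"
    using near \<open>0 < \<delta>\<close> \<open>0 \<le> \<epsilon>\<close>
    by (intro mult_mono) (auto simp: \<delta>_def norm_minus_commute)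
  also have "\<dots> = \<epsilon> * \<delta>"
  proof -
    have "norm v + 1 \<noteq> 0"
      using norm_ge_zero[of v] by linarith
    then show ?thesis by simp
  qed
  finally show ?thesis
    using \<open>0 < \<delta>\<close> by (simp add: mult.commute)
qed

lemma ln_small_le:
  fixes c t M :: real
  assumes "0 < c" "0 < t" "t \<le> exp (- M / c) / 2"
  shows "c * ln (2 * t) \<le> - M"
proof -
  have "ln (2 * t) \<le> ln (exp (- M / c))"
    using assms by (subst ln_le_cancel_iff) auto
  then have "ln (2 * t) \<le> - M / c" by simp
  then show ?thesis
    using \<open>0 < c\<close> by (simp add: field_simps)
qed

lemma xlnx_mix_le:
  fixes p q t :: real
  assumes "0 \<le> p" "0 < q" "q \<le> 1" "0 < t" "t \<le> 1"
  shows "((1 - t) * p + t * q) * ln ((1 - t) * p + t * q) - p * ln p \<le> t"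
proof -
  define r where "r = (1 - t) * p + t * q"
  have "0 < r"
    unfolding r_def using assms by (intro add_nonneg_pos) auto
  then have "r * ln r \<le> (1 - t) * (p * ln p) + t * (q * ln q)"
    unfolding r_def using assms by (intro xlnx_convex) auto
  also have "\<dots> = p * ln p + t * (q * ln q - p * ln p)"
    by (simp add: algebra_simps)
  also have "t * (q * ln q - p * ln p) \<le> t * (1 - p)"
    using xlnx_nonpos[of q] xlnx_ge[of p] assms by (intro mult_left_mono) auto
  also have "t * (1 - p) \<le> t"
    using assms by (simp add: algebra_simps)
  finally show ?thesis
    unfolding r_def by simp
qed

text \<open>The weight \<open>(1 - t) p + t q\<close> is squeezed into \<open>[t c, 2 t]\<close>, which costs \<open>t c ln (2 t)\<close>.\<close>

lemma xlnx_mix_small_le: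
  fixes p q t c :: real
  assumes p: "0 \<le> p" "p \<le> t\<^sup>2 / 4" and q: "0 < c" "c \<le> q" "q \<le> 1" and t: "0 < t" "t \<le> 1/4"
  shows "((1 - t) * p + t * q) * ln ((1 - t) * p + t * q) - p * ln p \<le> t * c * ln (2 * t) + t"
proof -
  define r where "r = (1 - t) * p + t * q"
  have "t * t \<le> t" using t by (simp add: mult_le_cancel_left1)
  then have "p \<le> t" using p t unfolding power2_eq_square by linarith
  moreover have "(1 - t) * p \<le> p"
    using p t by (intro mult_left_le_one_le) auto
  moreover have "t * q \<le> t"
    using q t by (intro mult_left_le) auto
  ultimately have "r \<le> 2 * t"
    unfolding r_def by linarith
  moreover have "t * c \<le> r"
    unfolding r_def using p q t by (intro add_increasing mult_left_mono mult_nonneg_nonneg) auto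
  ultimately have "r * ln r \<le> t * c * ln (2 * t)"
    using t q by (intro xlnx_le_of_bounds) auto
  moreover have "- (p * ln p) \<le> t"
  proof -
    have "sqrt p \<le> sqrt (t\<^sup>2 / 4)" using p by simp
    also have "\<dots> = t / 2" using t by (simp add: real_sqrt_divide)
    finally show ?thesis using neg_xlnx_le_sqrt[OF p(1)] by simp
  qed
  ultimately show ?thesis unfolding r_def by simp
qed

lemma neg_entropy_mix_le:
  assumes p: "prob_weights D p" and q: "prob_weights D q"
    and c: "0 < c" "\<And>j. j < D \<Longrightarrow> c \<le> q j"
    and j0: "j0 < D" "p j0 \<le> t\<^sup>2 / 4" and t: "0 < t" "t \<le> 1/4"
  shows "neg_entropy D (\<lambda>j. (1 - t) * p j + t * q j) \<le> neg_entropy D p + t * (c * ln (2 * t) + real D)"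
proof -
  define \<Delta> where "\<Delta> j = ((1 - t) * p j + t * q j) * ln ((1 - t) * p j + t * q j) - p j * ln (p j)" for j
  have p_j: "0 \<le> p j" and q_j: "q j \<le> 1" if "j < D" for j
    using p q that prob_weights_le_one by (auto simp: prob_weights_def)
  have \<Delta>_le: "\<Delta> j \<le> t" if "j < D" for j
    unfolding \<Delta>_def using p_j[OF that] q_j[OF that] c(1) c(2)[OF that] t
    by (intro xlnx_mix_le) auto
  have \<Delta>_j0: "\<Delta> j0 \<le> t * c * ln (2 * t) + t"
    unfolding \<Delta>_def using p_j[OF j0(1)] q_j[OF j0(1)] c(1) c(2)[OF j0(1)] j0(2) t
    by (intro xlnx_mix_small_le) auto
  have "neg_entropy D (\<lambda>j. (1 - t) * p j + t * q j) - neg_entropy D p = (\<Sum>j<D. \<Delta> j)"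
    by (simp add: neg_entropy_def \<Delta>_def sum_subtractf)
  also have "\<dots> = \<Delta> j0 + (\<Sum>j\<in>{..<D} - {j0}. \<Delta> j)"
    using j0 by (simp add: sum.remove)
  also have "\<dots> \<le> (t * c * ln (2 * t) + t) + (\<Sum>j\<in>{..<D} - {j0}. t)"
    using \<Delta>_j0 \<Delta>_le by (intro add_mono sum_mono) auto
  also have "(\<Sum>j\<in>{..<D} - {j0}. t) = (real D - 1) * t"
    using j0 by (simp add: card_Diff_singleton of_nat_diff)
  finally show ?thesis
    by (simp add: algebra_simps)
qed

text \<open>Represent \<open>s\<close> almost optimally by weights \<open>p\<close>, which must nearly vanish at a vertex
  \<open>e j0\<close> off the supporting face of \<open>s\<close>, and move towards \<open>s'\<close> through weights \<open>q\<close> that are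
  uniformly positive.\<close>

lemma sigma_segment_le:
  assumes s: "s \<in> newton e D" and j0: "j0 < D"
    and face: "\<And>j. j < D \<Longrightarrow> v \<bullet> e j \<le> v \<bullet> s" and below: "v \<bullet> e j0 < v \<bullet> s"
    and "0 < \<rho>" "0 < c"
    and near: "\<And>y. norm (y - s') \<le> \<rho> \<Longrightarrow>
      \<exists>q. prob_weights D q \<and> convex_comb e D q = y \<and> (\<forall>j<D. c \<le> q j)"
    and t: "0 < t" "t \<le> 1/4"
  shows "sigma e D ((1 - t) *\<^sub>R s + t *\<^sub>R s') \<le> sigma e D s + t * (c * ln (2 * t) + real D)"
proof -
  define \<eta> where "\<eta> = min (t * \<rho>) (t\<^sup>2 / 4 * (v \<bullet> s - v \<bullet> e j0) / (norm v + 1))"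
  have "0 < \<eta>"
    using t \<open>0 < \<rho>\<close> below by (simp add: \<eta>_def add_nonneg_pos)
  obtain p where p: "prob_weights D p" "neg_entropy D p \<le> sigma e D s"
    and p_near: "norm (convex_comb e D p - s) \<le> \<eta>"
    using sigma_approx_by_neg_entropy[OF s \<open>0 < \<eta>\<close>] by blast
  have "p j0 \<le> t\<^sup>2 / 4"
    using p_near
    by (intro weight_small_near_face[where e = e and v = v and s = s and \<epsilon> = "t\<^sup>2 / 4", OF p(1) j0 face below])
       (auto simp: \<eta>_def)
  define y where "y = s' + ((1 - t) / t) *\<^sub>R (s - convex_comb e D p)"
  have "norm (y - s') = (1 - t) / t * norm (convex_comb e D p - s)"
    using t by (simp add: y_def norm_minus_commute)
  also have "\<dots> \<le> 1 / t * (t * \<rho>)"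
    using t p_near by (intro mult_mono) (auto simp: \<eta>_def divide_right_mono)
  finally obtain q where q: "prob_weights D q" "convex_comb e D q = y" "\<forall>j<D. c \<le> q j"
    using near t by auto
  have "convex_comb e D (\<lambda>j. (1 - t) * p j + t * q j) = (1 - t) *\<^sub>R convex_comb e D p + t *\<^sub>R y"
    by (simp only: convex_comb_mix q(2))
  also have "t *\<^sub>R y = t *\<^sub>R s' + (1 - t) *\<^sub>R (s - convex_comb e D p)"
    using t by (simp add: y_def scaleR_add_right)
  finally have "(1 - t) *\<^sub>R s + t *\<^sub>R s' = convex_comb e D (\<lambda>j. (1 - t) * p j + t * q j)"
    by (simp add: algebra_simps)
  then have "sigma e D ((1 - t) *\<^sub>R s + t *\<^sub>R s') \<le> neg_entropy D (\<lambda>j. (1 - t) * p j + t * q j)"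
    using t by (simp add: sigma_le_neg_entropy prob_weights_mix p(1) q(1))
  also have "\<dots> \<le> neg_entropy D p + t * (c * ln (2 * t) + real D)"
    using q(3) by (intro neg_entropy_mix_le[OF p(1) q(1) \<open>0 < c\<close> _ j0 \<open>p j0 \<le> t\<^sup>2 / 4\<close> t]) auto
  finally show ?thesis using p(2) by simp
qed

lemma sigma_infinite_slope:
  assumes s: "s \<in> newton e D" "s \<notin> interior (newton e D)"
    and s': "s' \<in> interior (newton e D)"
  shows "\<forall>\<^sub>F t in at_right 0. sigma e D ((1 - t) *\<^sub>R s + t *\<^sub>R s') \<le> sigma e D s - K * t"
proof -
  obtain v j0 where "j0 < D" and face: "\<And>y. y \<in> newton e D \<Longrightarrow> v \<bullet> y \<le> v \<bullet> s"
    and "v \<bullet> e j0 < v \<bullet> s"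
    using newton_boundary_face[OF s s'] by blast
  obtain \<rho> c where "0 < \<rho>" "0 < c" and near: "\<And>y. norm (y - s') \<le> \<rho> \<Longrightarrow>
      \<exists>q. prob_weights D q \<and> convex_comb e D q = y \<and> (\<forall>j<D. c \<le> q j)"
    using interior_newton_uniform_weights[OF s'] by blast
  define t0 where "t0 = min (1/4) (exp (- (K + real D) / c) / 2)"
  have "sigma e D ((1 - t) *\<^sub>R s + t *\<^sub>R s') \<le> sigma e D s - K * t"
    if "0 < t" "t < t0" for t
  proof -
    have "t \<le> 1/4" "t \<le> exp (- (K + real D) / c) / 2"
      using that by (auto simp: t0_def)
    have "sigma e D ((1 - t) *\<^sub>R s + t *\<^sub>R s') \<le> sigma e D s + t * (c * ln (2 * t) + real D)"
      using face e_in_newton by (intro sigma_segment_le[OF s(1) \<open>j0 < D\<close> _ \<open>v \<bullet> e j0 < v \<bullet> s\<close>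
          \<open>0 < \<rho>\<close> \<open>0 < c\<close> near \<open>0 < t\<close> \<open>t \<le> 1/4\<close>]) auto
    also have "t * (c * ln (2 * t) + real D) \<le> t * (- K)"
      using ln_small_le[OF \<open>0 < c\<close> \<open>0 < t\<close> \<open>t \<le> exp (- (K + real D) / c) / 2\<close>] \<open>0 < t\<close>
      by (intro mult_left_mono) auto
    finally show ?thesis by (simp add: mult.commute)
  qed
  moreover have "0 < t0" by (simp add: t0_def)
  ultimately show ?thesis
    unfolding eventually_at_right_field by blast
qed

section \<open>Measurability and integrability\<close>

text \<open>On the polytope \<open>\<sigma>\<close> is a supremum of functions that are continuous in \<open>\<alpha>\<close>, so the
  supremum may be taken over a countable dense set of \<open>\<alpha>\<close>.\<close>

lemma sigma_on_newton_borel: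
  "(\<lambda>s. if s \<in> newton e D then sigma e D s else 0) \<in> borel_measurable borel"
proof -
  obtain Q :: "'a set" where "countable Q" and dense: "\<And>X. open X \<Longrightarrow> X \<noteq> {} \<Longrightarrow> \<exists>\<alpha>\<in>Q. \<alpha> \<in> X"
    using countable_dense_setE by blast
  have less_sigma_iff: "a < sigma e D s \<longleftrightarrow> (\<exists>\<alpha>\<in>Q. a < s \<bullet> \<alpha> - log_partition e D \<alpha>)"
    if s: "s \<in> newton e D" for s a
  proof
    assume "a < sigma e D s"
    then obtain \<beta> where "a < s \<bullet> \<beta> - log_partition e D \<beta>"
      unfolding sigma_eq_SUP_dual using less_cSUP_iff[OF _ bdd_above_dual[OF s]] by auto
    moreover have "open {\<beta>. a < s \<bullet> \<beta> - log_partition e D \<beta>}"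
      using continuous_on_log_partition[OF newton_nonempty_imp_pos[OF s]]
      by (intro open_Collect_less continuous_intros) auto
    ultimately show "\<exists>\<alpha>\<in>Q. a < s \<bullet> \<alpha> - log_partition e D \<alpha>"
      using dense by blast
  qed (use dual_le_sigma[OF s] in \<open>auto intro: order_less_le_trans\<close>)
  show ?thesis
  proof (rule borel_measurable_iff_greater[THEN iffD2], intro allI)
    fix a
    have "{s \<in> space borel. a < (if s \<in> newton e D then sigma e D s else 0)} =
        (newton e D \<inter> (\<Union>\<alpha>\<in>Q. {s. a < s \<bullet> \<alpha> - log_partition e D \<alpha>})) \<union>
        (if a < 0 then - newton e D else {})"
      using less_sigma_iff by auto
    also have "\<dots> \<in> sets borel"
    proof -
      have "{s. a < s \<bullet> \<alpha> - log_partition e D \<alpha>} \<in> sets borel" for \<alpha>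
        by (intro borel_open open_Collect_less continuous_intros)
      then have "(\<Union>\<alpha>\<in>Q. {s. a < s \<bullet> \<alpha> - log_partition e D \<alpha>}) \<in> sets borel"
        using \<open>countable Q\<close> by (intro sets.countable_UN') auto
      moreover have "newton e D \<in> sets borel"
        using newton_compact by (intro borel_closed compact_imp_closed)
      ultimately show ?thesis by auto
    qed
    finally show "{s \<in> space borel. a < (if s \<in> newton e D then sigma e D s else 0)} \<in> sets borel" .
  qed
qed

lemma sigma_comp_measurable:
  assumes "f \<in> borel_measurable lebesgue" and "AE x in lebesgue. f x \<in> newton e D"
  shows "(\<lambda>x. sigma e D (f x)) \<in> borel_measurable lebesgue"
proof (rule borel_measurable_AE)
  show "(\<lambda>x. if f x \<in> newton e D then sigma e D (f x) else 0) \<in> borel_measurable lebesgue"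
    using measurable_compose[OF assms(1) sigma_on_newton_borel] by simp
  show "AE x in lebesgue. (if f x \<in> newton e D then sigma e D (f x) else 0) = sigma e D (f x)"
    using assms(2) by eventually_elim simp
qed

lemma set_integrable_const:
  fixes c :: real
  assumes "R \<in> lmeasurable"
  shows "set_integrable lebesgue R (\<lambda>_. c)"
proof -
  have "integrable lebesgue (indicator R :: 'a \<Rightarrow> real)"
    using assms by (auto simp: fmeasurable_def)
  then show ?thesis
    unfolding set_integrable_def by (simp add: integrable_mult_left)
qed

lemma set_integral_const_lmeasurable:
  fixes a :: real
  assumes "R \<in> lmeasurable"
  shows "(LINT x:R|lebesgue. a) = a * measure lebesgue R"
  using assms set_integral_const[of R lebesgue a] by (auto simp: fmeasurable_def mult.commute)

lemma set_integral_indicator_subset: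
  assumes "R \<in> fmeasurable M" "A \<in> sets M" "A \<subseteq> R"
  shows "set_integrable M R (indicator A :: 'a \<Rightarrow> real)"
    and "(LINT x:R|M. indicator A x) = measure M A"
proof -
  have ind_eq: "(\<lambda>x. indicator R x *\<^sub>R indicator A x) = (indicator A :: 'a \<Rightarrow> real)"
    using assms(3) by (auto simp: indicator_def fun_eq_iff)
  have "A \<in> fmeasurable M"
    by (rule fmeasurableI2[OF assms(1,3,2)])
  then show "set_integrable M R (indicator A :: 'a \<Rightarrow> real)"
    unfolding set_integrable_def ind_eq by (auto simp: fmeasurable_def)
  show "(LINT x:R|M. indicator A x) = measure M A"
    unfolding set_lebesgue_integral_def ind_eq using assms(2) by (simp add: Int_absorb2 sets.sets_into_space)
qed

lemma set_integrable_sigma_comp: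
  assumes f: "f \<in> borel_measurable lebesgue" and fN: "AE x in lebesgue. f x \<in> newton e D"
    and R: "R \<in> lmeasurable"
  shows "set_integrable lebesgue R (\<lambda>x. sigma e D (f x))"
proof (rule set_integrable_bound[OF set_integrable_const[OF R, of "ln (real D)"]])
  show "set_borel_measurable lebesgue R (\<lambda>x. sigma e D (f x))"
    unfolding set_borel_measurable_def using sigma_comp_measurable[OF f fN] R
    by (intro borel_measurable_scaleR borel_measurable_indicator) auto
  show "AE x in lebesgue. x \<in> R \<longrightarrow> norm (sigma e D (f x)) \<le> norm (ln (real D))"
    using fN by eventually_elim (use sigma_nonpos sigma_ge_minus_ln in fastforce)
qed

lemma smooth_on_deriv_continuous:
  assumes "smooth_on UNIV \<phi>"
  shows "continuous_on UNIV (\<lambda>x. frechet_derivative \<phi> (at x) v)"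
proof -
  define \<Phi> where "\<Phi> = (\<lambda>F. {h :: 'a \<Rightarrow> real. continuous_on UNIV h \<and> (\<forall>x\<in>UNIV. h differentiable at x) \<and>
      (\<forall>v. (\<lambda>x. frechet_derivative h (at x) v) \<in> F)})"
  have "mono \<Phi>" unfolding \<Phi>_def by (rule monoI) auto
  have "\<phi> \<in> gfp \<Phi>" using assms by (simp add: smooth_on_def \<Phi>_def)
  then have "(\<lambda>x. frechet_derivative \<phi> (at x) v) \<in> gfp \<Phi>"
    by (subst (asm) gfp_unfold[OF \<open>mono \<Phi>\<close>]) (simp add: \<Phi>_def)
  then show ?thesis
    by (subst (asm) gfp_unfold[OF \<open>mono \<Phi>\<close>]) (simp add: \<Phi>_def)
qed

lemma continuous_on_grad: "smooth_on UNIV \<phi> \<Longrightarrow> continuous_on UNIV (grad \<phi>)"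
  unfolding grad_def[abs_def]
  by (intro continuous_on_sum continuous_on_scaleR smooth_on_deriv_continuous continuous_on_const)

lemma set_integrable_inner_continuous:
  fixes f g :: "'a::euclidean_space \<Rightarrow> 'a"
  assumes f: "f \<in> borel_measurable lebesgue" and fK: "AE x in lebesgue. f x \<in> K" and "bounded K"
    and R: "compact R" and g: "continuous_on UNIV g"
  shows "set_integrable lebesgue R (\<lambda>x. f x \<bullet> g x)"
proof -
  obtain B where B: "\<And>s. s \<in> K \<Longrightarrow> norm s \<le> B"
    using \<open>bounded K\<close> by (auto simp: bounded_iff)
  obtain G where G: "\<And>x. x \<in> R \<Longrightarrow> norm (g x) \<le> G"
    using compact_imp_bounded[OF compact_continuous_image[OF continuous_on_subset[OF g] R]]
    by (auto simp: bounded_iff)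
  have "g \<in> borel_measurable lborel"
    using borel_measurable_continuous_onI[OF g] by simp
  then have "g \<in> borel_measurable lebesgue"
    by (rule measurable_completion)
  show ?thesis
  proof (rule set_integrable_bound[OF set_integrable_const[OF lmeasurable_compact[OF R], of "B * G"]])
    show "set_borel_measurable lebesgue R (\<lambda>x. f x \<bullet> g x)"
      unfolding set_borel_measurable_def using f \<open>g \<in> borel_measurable lebesgue\<close> R
      by (intro borel_measurable_scaleR borel_measurable_indicator borel_measurable_inner)
         (auto intro: lmeasurable_compact[THEN fmeasurableD])
    show "AE x in lebesgue. x \<in> R \<longrightarrow> norm (f x \<bullet> g x) \<le> norm (B * G)"
      using fK
    proof eventually_elim
      case (elim x)
      show ?case
      proof
        assume "x \<in> R"
        have "norm (f x \<bullet> g x) \<le> norm (f x) * norm (g x)"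
          by (simp add: Cauchy_Schwarz_ineq2)
        also have "\<dots> \<le> B * G"
          using B[OF elim] G[OF \<open>x \<in> R\<close>] order_trans[OF norm_ge_zero B[OF elim]]
          by (intro mult_mono) auto
        finally show "norm (f x \<bullet> g x) \<le> norm (B * G)" by simp
      qed
    qed
  qed
qed

lemma AF_D:
  assumes "\<omega> \<in> AF e D R \<omega>0"
  shows "\<omega> \<in> borel_measurable lebesgue" "\<And>x. x \<notin> R \<Longrightarrow> \<omega> x = 0"
    "AE x in lebesgue. \<omega> x \<in> newton e D"
    "\<And>\<phi>. smooth_on UNIV \<phi> \<Longrightarrow> compact (closure {x. \<phi> x \<noteq> 0}) \<Longrightarrow>
      closure {x. \<phi> x \<noteq> 0} \<subseteq> interior R \<Longrightarrow> (LINT x|lebesgue. \<omega> x \<bullet> grad \<phi> x) = 0"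
    "\<And>\<phi>. smooth_on UNIV \<phi> \<Longrightarrow>
      (LINT x:R|lebesgue. \<omega> x \<bullet> grad \<phi> x) = (LINT x:R|lebesgue. \<omega>0 x \<bullet> grad \<phi> x)"
  using assms unfolding AF_def asymptotic_flow_def same_flux_def by blast+

lemma AF_flux_integrable:
  assumes R: "compact R" and \<omega>: "\<omega> \<in> AF e D R \<omega>0" and \<phi>: "smooth_on UNIV \<phi>"
  shows "set_integrable lebesgue R (\<lambda>x. \<omega> x \<bullet> grad \<phi> x)"
    and "integrable lebesgue (\<lambda>x. \<omega> x \<bullet> grad \<phi> x)"
proof -
  show R_int: "set_integrable lebesgue R (\<lambda>x. \<omega> x \<bullet> grad \<phi> x)"
    using AF_D(1,3)[OF \<omega>] newton_compact R continuous_on_grad[OF \<phi>]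
    by (intro set_integrable_inner_continuous compact_imp_bounded)
  have "(\<lambda>x. indicator R x *\<^sub>R (\<omega> x \<bullet> grad \<phi> x)) = (\<lambda>x. \<omega> x \<bullet> grad \<phi> x)"
    using AF_D(2)[OF \<omega>] by (auto simp: indicator_def fun_eq_iff)
  then show "integrable lebesgue (\<lambda>x. \<omega> x \<bullet> grad \<phi> x)"
    using R_int by (simp add: set_integrable_def)
qed

lemma AF_segment:
  assumes R: "compact R" and \<omega>1: "\<omega>1 \<in> AF e D R \<omega>0" and \<omega>2: "\<omega>2 \<in> AF e D R \<omega>0"
    and t: "0 \<le> t" "t \<le> 1"
  shows "(\<lambda>x. (1 - t) *\<^sub>R \<omega>1 x + t *\<^sub>R \<omega>2 x) \<in> AF e D R \<omega>0"
proof -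
  let ?\<omega> = "\<lambda>x. (1 - t) *\<^sub>R \<omega>1 x + t *\<^sub>R \<omega>2 x"
  have inner_eq: "?\<omega> x \<bullet> grad \<phi> x = (1 - t) * (\<omega>1 x \<bullet> grad \<phi> x) + t * (\<omega>2 x \<bullet> grad \<phi> x)" for x \<phi>
    by (simp add: inner_add_left)
  have "?\<omega> \<in> borel_measurable lebesgue"
    using AF_D(1)[OF \<omega>1] AF_D(1)[OF \<omega>2]
    by (intro borel_measurable_add borel_measurable_scaleR borel_measurable_const)
  moreover have "\<forall>x. x \<notin> R \<longrightarrow> ?\<omega> x = 0"
    using AF_D(2)[OF \<omega>1] AF_D(2)[OF \<omega>2] by simp
  moreover have "AE x in lebesgue. ?\<omega> x \<in> newton e D"
    using AF_D(3)[OF \<omega>1] AF_D(3)[OF \<omega>2] by eventually_elim (intro newton_segment t)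
  moreover have "(LINT x|lebesgue. ?\<omega> x \<bullet> grad \<phi> x) = 0"
    if "smooth_on UNIV \<phi> \<and> compact (closure {x. \<phi> x \<noteq> 0}) \<and> closure {x. \<phi> x \<noteq> 0} \<subseteq> interior R"
    for \<phi>
  proof -
    have "(LINT x|lebesgue. ?\<omega> x \<bullet> grad \<phi> x)
        = (1 - t) * (LINT x|lebesgue. \<omega>1 x \<bullet> grad \<phi> x) + t * (LINT x|lebesgue. \<omega>2 x \<bullet> grad \<phi> x)"
      unfolding inner_eq using that AF_flux_integrable(2)[OF R \<omega>1] AF_flux_integrable(2)[OF R \<omega>2]
      by simp
    then show ?thesis
      using that AF_D(4)[OF \<omega>1] AF_D(4)[OF \<omega>2] by simp
  qed
  moreover have "(LINT x:R|lebesgue. ?\<omega> x \<bullet> grad \<phi> x) = (LINT x:R|lebesgue. \<omega>0 x \<bullet> grad \<phi> x)"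
    if "smooth_on UNIV \<phi>" for \<phi>
  proof -
    have "(LINT x:R|lebesgue. ?\<omega> x \<bullet> grad \<phi> x)
        = (1 - t) * (LINT x:R|lebesgue. \<omega>1 x \<bullet> grad \<phi> x) + t * (LINT x:R|lebesgue. \<omega>2 x \<bullet> grad \<phi> x)"
      unfolding inner_eq using AF_flux_integrable(1)[OF R \<omega>1 that] AF_flux_integrable(1)[OF R \<omega>2 that]
      by simp
    then show ?thesis
      using AF_D(5)[OF \<omega>1 that] AF_D(5)[OF \<omega>2 that] by (simp add: algebra_simps)
  qed
  ultimately show ?thesis
    unfolding AF_def asymptotic_flow_def same_flux_def by blast
qed

section \<open>Minimisers avoid the boundary of the polytope\<close>

lemma eventually_on_large_subset:
  assumes B: "B \<in> sets M" "emeasure M B < \<infinity>" and c: "0 \<le> c" "c < measure M B"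
    and P: "\<And>n. {x \<in> space M. P n x} \<in> sets M"
    and ev: "\<And>x. x \<in> B \<Longrightarrow> eventually (\<lambda>n. P n x) sequentially"
  obtains A n where "A \<in> sets M" "A \<subseteq> B" "c < measure M A" "\<And>x. x \<in> A \<Longrightarrow> P n x"
proof -
  define A where "A n = B \<inter> (\<Inter>m\<in>{n..}. {x \<in> space M. P m x})" for n
  have A_sets: "A n \<in> sets M" for n
    unfolding A_def using B P by (intro sets.Int sets.countable_INT') auto
  have "incseq A"
    unfolding A_def incseq_def by auto
  have A_Un: "(\<Union>n. A n) = B"
  proof
    show "B \<subseteq> (\<Union>n. A n)"
    proof
      fix x assume "x \<in> B"
      then obtain n where "\<forall>m\<ge>n. P m x"
        using ev[OF \<open>x \<in> B\<close>] by (auto simp: eventually_sequentially)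
      moreover have "x \<in> space M"
        using sets.sets_into_space[OF B(1)] \<open>x \<in> B\<close> by auto
      ultimately have "x \<in> A n"
        using \<open>x \<in> B\<close> by (auto simp: A_def)
      then show "x \<in> (\<Union>n. A n)" by auto
    qed
  qed (auto simp: A_def)
  have "range A \<subseteq> sets M"
    using A_sets by auto
  from Lim_emeasure_incseq[OF this \<open>incseq A\<close>]
  have "(\<lambda>n. emeasure M (A n)) \<longlonglongrightarrow> emeasure M B"
    unfolding A_Un .
  moreover have B_fin: "B \<in> fmeasurable M"
    using B unfolding fmeasurable_def by blast
  then have "ennreal c < emeasure M B"
    using c by (simp add: emeasure_eq_measure2 ennreal_lessI)
  ultimately have "\<forall>\<^sub>F n in sequentially. ennreal c < emeasure M (A n)"
    by (rule order_tendstoD(1))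
  then obtain n where "ennreal c < emeasure M (A n)"
    by (auto simp: eventually_sequentially)
  moreover have "A n \<subseteq> B"
    by (auto simp: A_def)
  then have "A n \<in> fmeasurable M"
    by (rule fmeasurableI2[OF B_fin _ A_sets])
  ultimately have "c < measure M (A n)"
    using c by (simp add: emeasure_eq_measure2 ennreal_less_iff)
  moreover have "P n x" if "x \<in> A n" for x
    using that by (auto simp: A_def)
  ultimately show ?thesis
    using that A_sets \<open>A n \<subseteq> B\<close> by blast
qed

lemma filterlim_inverse_Suc_at_right: "filterlim (\<lambda>n. inverse (real (Suc n))) (at_right 0) sequentially"
  by (rule tendsto_imp_filterlim_at_right[OF LIMSEQ_inverse_real_of_nat]) simp

lemma set_integral_sigma_segment_le:
  fixes w w' :: "'a::euclidean_space \<Rightarrow> 'a"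
  assumes R: "R \<in> lmeasurable"
    and w: "w \<in> borel_measurable lebesgue" "AE x in lebesgue. w x \<in> newton e D"
    and w': "w' \<in> borel_measurable lebesgue" "AE x in lebesgue. w' x \<in> newton e D"
    and A: "A \<in> sets lebesgue" "A \<subseteq> R" and t: "0 \<le> t" "t \<le> 1"
    and slope: "\<And>x. x \<in> A \<Longrightarrow> sigma e D ((1 - t) *\<^sub>R w x + t *\<^sub>R w' x) \<le> sigma e D (w x) - K * t"
  shows "(LINT x:R|lebesgue. sigma e D ((1 - t) *\<^sub>R w x + t *\<^sub>R w' x))
    \<le> (LINT x:R|lebesgue. sigma e D (w x))
       + t * (ln (real D) * measure lebesgue R - (K + ln (real D)) * measure lebesgue A)"
proof -
  define c where "c = ln (real D)"
  define wt where "wt x = (1 - t) *\<^sub>R w x + t *\<^sub>R w' x" for x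
  have "wt \<in> borel_measurable lebesgue"
    unfolding wt_def using w(1) w'(1)
    by (intro borel_measurable_add borel_measurable_scaleR borel_measurable_const)
  moreover have "AE x in lebesgue. wt x \<in> newton e D"
    using w(2) w'(2) by eventually_elim (simp add: wt_def newton_segment t)
  ultimately have int_wt: "set_integrable lebesgue R (\<lambda>x. sigma e D (wt x))"
    using R by (rule set_integrable_sigma_comp)
  have int_w: "set_integrable lebesgue R (\<lambda>x. sigma e D (w x))"
    using w R by (rule set_integrable_sigma_comp)
  note int_A = set_integral_indicator_subset(1)[OF R A]
    and integral_A = set_integral_indicator_subset(2)[OF R A]
  have bound: "AE x in lebesgue. x \<in> R \<longrightarrow>
      sigma e D (wt x) \<le> sigma e D (w x) + t * c - t * (K + c) * indicator A x"
    using w(2) w'(2)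
  proof eventually_elim
    case (elim x)
    show ?case
    proof (cases "x \<in> A")
      case True
      then show ?thesis
        using slope[OF True] by (simp add: wt_def algebra_simps)
    next
      case False
      then show ?thesis
        using sigma_segment_le_ln[OF elim t] by (simp add: wt_def c_def)
    qed
  qed
  have "(LINT x:R|lebesgue. sigma e D (wt x))
      \<le> (LINT x:R|lebesgue. sigma e D (w x) + t * c - t * (K + c) * indicator A x)"
    using int_wt int_w int_A set_integrable_const[OF R] bound
    by (intro set_integral_mono_AE) auto
  also have "\<dots> = (LINT x:R|lebesgue. sigma e D (w x)) + t * c * measure lebesgue R
      - t * (K + c) * measure lebesgue A"
    using int_w int_A set_integrable_const[OF R] R
    by (simp add: set_integral_const_lmeasurable[OF R] integral_A)
  finally show ?thesis
    by (simp add: wt_def c_def algebra_simps)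
qed

lemma sigma_segment_uniform_slope:
  assumes R: "compact R" and \<omega>: "\<omega> \<in> AF e D R \<omega>0" and \<omega>': "\<omega>' \<in> AF e D R \<omega>0"
    and B: "B \<in> sets lebesgue" "emeasure lebesgue B < \<infinity>" and c: "0 \<le> c" "c < measure lebesgue B"
    and boundary: "\<And>x. x \<in> B \<Longrightarrow> \<omega> x \<in> newton e D \<and> \<omega> x \<notin> interior (newton e D) \<and>
      \<omega>' x \<in> interior (newton e D)"
  obtains A t where "A \<in> sets lebesgue" "A \<subseteq> B" "c < measure lebesgue A" "0 < t" "t \<le> 1"
    "\<And>x. x \<in> A \<Longrightarrow> sigma e D ((1 - t) *\<^sub>R \<omega> x + t *\<^sub>R \<omega>' x) \<le> sigma e D (\<omega> x) - K * t"
proof -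
  define wt where "wt t x = (1 - t) *\<^sub>R \<omega> x + t *\<^sub>R \<omega>' x" for t x
  have wt_AF: "wt t \<in> AF e D R \<omega>0" if "0 \<le> t" "t \<le> 1" for t
    using AF_segment[OF R \<omega> \<omega>' that] by (simp add: wt_def[abs_def])
  define slope where "slope n x \<longleftrightarrow>
    sigma e D (wt (inverse (real (Suc n))) x) \<le> sigma e D (\<omega> x) - K * inverse (real (Suc n))" for n x
  have slope_sets: "{x \<in> space lebesgue. slope n x} \<in> sets lebesgue" for n
    unfolding slope_def using AF_D(1,3)[OF \<omega>] AF_D(1,3)[OF wt_AF]
    by (intro borel_measurable_le borel_measurable_diff borel_measurable_const sigma_comp_measurable)
       (auto simp: field_simps)
  have slope_ev: "\<forall>\<^sub>F n in sequentially. slope n x" if "x \<in> B" for x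
    using boundary[OF that] unfolding slope_def wt_def
    by (intro eventually_compose_filterlim[OF sigma_infinite_slope filterlim_inverse_Suc_at_right]) auto
  obtain A n where A: "A \<in> sets lebesgue" "A \<subseteq> B" "c < measure lebesgue A"
    and slope_A: "\<And>x. x \<in> A \<Longrightarrow> slope n x"
    using eventually_on_large_subset[OF B c slope_sets slope_ev] by blast
  have "\<And>x. x \<in> A \<Longrightarrow> sigma e D ((1 - inverse (real (Suc n))) *\<^sub>R \<omega> x + inverse (real (Suc n)) *\<^sub>R \<omega>' x)
      \<le> sigma e D (\<omega> x) - K * inverse (real (Suc n))"
    using slope_A unfolding slope_def wt_def .
  moreover have "0 < inverse (real (Suc n))" "inverse (real (Suc n)) \<le> 1"
    by (auto simp: field_simps)
  ultimately show ?thesis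
    using that[OF A] by blast
qed

text \<open>A small step towards the competitor gains at an arbitrarily large rate on most of \<open>B\<close>,
  uniformly by the Egorov-type selection, while losing at most \<open>t ln D\<close> elsewhere.\<close>

lemma AF_segment_decreases_sigma:
  assumes R: "compact R" and \<omega>: "\<omega> \<in> AF e D R \<omega>0" and \<omega>': "\<omega>' \<in> AF e D R \<omega>0"
    and B: "B \<in> sets lebesgue" "B \<subseteq> R" "0 < measure lebesgue B"
    and boundary: "\<And>x. x \<in> B \<Longrightarrow> \<omega> x \<in> newton e D \<and> \<omega> x \<notin> interior (newton e D) \<and>
      \<omega>' x \<in> interior (newton e D)"
  obtains t where "0 < t" "t \<le> 1"
    "(LINT x:R|lebesgue. sigma e D ((1 - t) *\<^sub>R \<omega> x + t *\<^sub>R \<omega>' x)) < (LINT x:R|lebesgue. sigma e D (\<omega> x))"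
proof -
  have R_fin: "R \<in> lmeasurable"
    using R by (rule lmeasurable_compact)
  have B_finite: "emeasure lebesgue B < \<infinity>"
    using fmeasurableI2[OF R_fin B(2) B(1)] unfolding fmeasurable_def by blast
  define c where "c = ln (real D)"
  have "0 \<le> c"
    unfolding c_def by (cases D) auto
  define K where "K = 2 * (c * measure lebesgue R + 1) / measure lebesgue B"
  have half: "0 \<le> measure lebesgue B / 2" "measure lebesgue B / 2 < measure lebesgue B"
    using B(3) by auto
  obtain A t where A: "A \<in> sets lebesgue" "A \<subseteq> B" and large: "measure lebesgue B / 2 < measure lebesgue A"
    and t: "0 < t" "t \<le> 1"
    and slope: "\<And>x. x \<in> A \<Longrightarrow> sigma e D ((1 - t) *\<^sub>R \<omega> x + t *\<^sub>R \<omega>' x) \<le> sigma e D (\<omega> x) - K * t"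
    using sigma_segment_uniform_slope[OF R \<omega> \<omega>' B(1) B_finite half boundary] by blast
  have "(LINT x:R|lebesgue. sigma e D ((1 - t) *\<^sub>R \<omega> x + t *\<^sub>R \<omega>' x))
      \<le> (LINT x:R|lebesgue. sigma e D (\<omega> x)) + t * (c * measure lebesgue R - (K + c) * measure lebesgue A)"
    unfolding c_def using A(2) B(2) slope t
    by (intro set_integral_sigma_segment_le[OF R_fin AF_D(1,3)[OF \<omega>] AF_D(1,3)[OF \<omega>'] A(1)]) auto
  also have "\<dots> < (LINT x:R|lebesgue. sigma e D (\<omega> x))"
  proof -
    have "0 < K"
      unfolding K_def using B(3) \<open>0 \<le> c\<close> by (intro divide_pos_pos) (auto intro: add_nonneg_pos)
    then have "K * (measure lebesgue B / 2) < K * measure lebesgue A"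
      using large by simp
    then have "c * measure lebesgue R + 1 < K * measure lebesgue A"
      using B(3) by (simp add: K_def)
    moreover have "0 \<le> c * measure lebesgue A"
      using \<open>0 \<le> c\<close> by simp
    ultimately have "c * measure lebesgue R - (K + c) * measure lebesgue A < 0"
      by (simp add: algebra_simps)
    then show ?thesis
      using t by (simp add: mult_pos_neg)
  qed
  finally show ?thesis
    using that t by blast
qed

lemma AF_minimiser_interior_on:
  assumes R: "compact R" and \<omega>: "\<omega> \<in> AF e D R \<omega>0" and \<omega>': "\<omega>' \<in> AF e D R \<omega>0"
    and U: "U \<in> sets lebesgue"
    and \<omega>'_U: "AE y in lebesgue. y \<in> U \<longrightarrow> \<omega>' y \<in> interior (newton e D)"
    and min: "\<And>\<omega>''. \<omega>'' \<in> AF e D R \<omega>0 \<Longrightarrow>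
      (LINT x:R|lebesgue. sigma e D (\<omega> x)) \<le> (LINT x:R|lebesgue. sigma e D (\<omega>'' x))"
  shows "AE y in lebesgue. y \<in> U \<inter> R \<longrightarrow> \<omega> y \<in> interior (newton e D)"
proof (rule ccontr)
  let ?N = "newton e D"
  assume not_AE: "\<not> ?thesis"
  note w = AF_D(1,3)[OF \<omega>] and w' = AF_D(1,3)[OF \<omega>']
  have R_fin: "R \<in> lmeasurable"
    using R by (rule lmeasurable_compact)
  define B where "B = U \<inter> R \<inter> \<omega> -` (?N - interior ?N) \<inter> \<omega>' -` interior ?N"
  have "?N - interior ?N \<in> sets borel"
    using newton_compact by (intro sets.Diff borel_closed borel_open compact_imp_closed open_interior)
  then have B_sets: "B \<in> sets lebesgue"
    unfolding B_def using U R_fin measurable_sets[OF w(1)] measurable_sets[OF w'(1), of "interior ?N"]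
    by (intro sets.Int) (auto simp: fmeasurable_def)
  have "B \<subseteq> R"
    by (auto simp: B_def)
  have "0 < measure lebesgue B"
  proof (rule ccontr)
    assume "\<not> 0 < measure lebesgue B"
    then have "emeasure lebesgue B = 0"
      using emeasure_eq_measure2[OF fmeasurableI2[OF R_fin \<open>B \<subseteq> R\<close> B_sets]]
      by (simp add: not_less measure_le_0_iff)
    then have "AE y in lebesgue. y \<notin> B"
      using B_sets by (intro AE_not_in null_setsI)
    with w(2) \<omega>'_U have "AE y in lebesgue. y \<in> U \<inter> R \<longrightarrow> \<omega> y \<in> interior ?N"
      by eventually_elim (auto simp: B_def)
    with not_AE show False ..
  qed
  moreover have "\<And>x. x \<in> B \<Longrightarrow> \<omega> x \<in> ?N \<and> \<omega> x \<notin> interior ?N \<and> \<omega>' x \<in> interior ?N"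
    by (auto simp: B_def)
  ultimately obtain t where "0 < t" "t \<le> 1" and
    "(LINT x:R|lebesgue. sigma e D ((1 - t) *\<^sub>R \<omega> x + t *\<^sub>R \<omega>' x)) < (LINT x:R|lebesgue. sigma e D (\<omega> x))"
    using AF_segment_decreases_sigma[OF R \<omega> \<omega>' B_sets \<open>B \<subseteq> R\<close>] by blast
  moreover have "(LINT x:R|lebesgue. sigma e D (\<omega> x))
      \<le> (LINT x:R|lebesgue. sigma e D ((1 - t) *\<^sub>R \<omega> x + t *\<^sub>R \<omega>' x))"
    using \<open>0 < t\<close> \<open>t \<le> 1\<close> by (intro min AF_segment[OF R \<omega> \<omega>']) auto
  ultimately show False
    by simp
qed

lemma flexible_countable_cover:
  assumes "flexible e D R \<omega>0"
  obtains \<U> where "countable \<U>" "interior R \<subseteq> \<Union>\<U>" "\<And>U. U \<in> \<U> \<Longrightarrow> open U"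
    "\<And>U. U \<in> \<U> \<Longrightarrow> \<exists>\<omega>'\<in>AF e D R \<omega>0. AE y in lebesgue. y \<in> U \<longrightarrow> \<omega>' y \<in> interior (newton e D)"
proof -
  define \<U> where "\<U> = {U. open U \<and>
    (\<exists>\<omega>'\<in>AF e D R \<omega>0. AE y in lebesgue. y \<in> U \<longrightarrow> \<omega>' y \<in> interior (newton e D))}"
  obtain \<U>' where "\<U>' \<subseteq> \<U>" "countable \<U>'" "\<Union>\<U>' = \<Union>\<U>"
    using Lindelof[of \<U>] by (auto simp: \<U>_def)
  have "interior R \<subseteq> \<Union>\<U>"
  proof
    fix x assume "x \<in> interior R"
    then obtain U where "open U" "x \<in> U"
      "\<exists>\<omega>'\<in>AF e D R \<omega>0. AE y in lebesgue. y \<in> U \<longrightarrow> \<omega>' y \<in> interior (newton e D)"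
      using assms unfolding flexible_def by blast
    then show "x \<in> \<Union>\<U>"
      unfolding \<U>_def by blast
  qed
  show ?thesis
  proof (rule that)
    show "countable \<U>'" "interior R \<subseteq> \<Union>\<U>'"
      using \<open>countable \<U>'\<close> \<open>interior R \<subseteq> \<Union>\<U>\<close> \<open>\<Union>\<U>' = \<Union>\<U>\<close> by simp_all
  qed (use \<open>\<U>' \<subseteq> \<U>\<close> in \<open>auto simp: \<U>_def\<close>)
qed

theorem mainTheorem14:
  fixes e :: "nat \<Rightarrow> 'a::euclidean_space" and D :: nat
    and R :: "'a set" and \<omega>0 \<omega> :: "'a \<Rightarrow> 'a"
  assumes span_e: "span (e ` {..<D}) = UNIV"
    and sum_e: "(\<Sum>i<D. e i) = 0"
    and R_compact: "compact R" and R_connected: "connected R"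
    and R_domain: "closure (interior R) = R"
    and R_boundary: "piecewise_smooth_boundary R"
    and b_flow: "asymptotic_flow e D R \<omega>0"
    and flex: "flexible e D R \<omega>0"
    and \<omega>_AF: "\<omega> \<in> AF e D R \<omega>0"
    and \<omega>_min: "\<And>\<omega>'. \<omega>' \<in> AF e D R \<omega>0 \<Longrightarrow>
        (LINT x:R|lebesgue. sigma e D (\<omega> x)) \<le> (LINT x:R|lebesgue. sigma e D (\<omega>' x))"
  shows "AE x in lebesgue. x \<in> interior R \<longrightarrow> \<omega> x \<in> interior (newton e D)"
proof -
  obtain \<U> where "countable \<U>" and cover: "interior R \<subseteq> \<Union>\<U>" and \<U>: "\<And>U. U \<in> \<U> \<Longrightarrow> open U"
    "\<And>U. U \<in> \<U> \<Longrightarrow> \<exists>\<omega>'\<in>AF e D R \<omega>0. AE y in lebesgue. y \<in> U \<longrightarrow> \<omega>' y \<in> interior (newton e D)"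
    using flexible_countable_cover[OF flex] by blast
  have "AE y in lebesgue. y \<in> U \<inter> R \<longrightarrow> \<omega> y \<in> interior (newton e D)" if U: "U \<in> \<U>" for U
  proof -
    obtain \<omega>' where "\<omega>' \<in> AF e D R \<omega>0" "AE y in lebesgue. y \<in> U \<longrightarrow> \<omega>' y \<in> interior (newton e D)"
      using \<U>(2)[OF U] by blast
    moreover have "U \<in> sets lebesgue"
      using borel_open[OF \<U>(1)[OF U]] by simp
    ultimately show ?thesis
      by (intro AF_minimiser_interior_on[OF R_compact \<omega>_AF _ _ _ \<omega>_min])
  qed
  then have "AE y in lebesgue. \<forall>U\<in>\<U>. y \<in> U \<inter> R \<longrightarrow> \<omega> y \<in> interior (newton e D)"
    by (subst AE_ball_countable[OF \<open>countable \<U>\<close>]) blast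
  then show ?thesis
  proof eventually_elim
    case (elim x)
    show ?case
    proof
      assume "x \<in> interior R"
      with cover interior_subset[of R] show "\<omega> x \<in> interior (newton e D)"
        using elim by blast
    qed
  qed
qed

end
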